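(* Let $\theta$ be a real number with $0<\theta<\tfrac{3\pi}{2}$. In the Cartesian plane let $O=(0,0)$, let $OA$ be the positive $x$-axis, and let $OB$ be the ray from $O$ making polar angle $\theta$ with $OA$, i.e. $OB=\{t(\cos\theta,\sin\theta): t\ge 0\}$. Let $l$ be the line $y=1$. Consider points $C, D, E$ satisfying: (i) $C=(c,1)\in l$ with $c>0$; (ii) $D$ lies on the ray $OB$; (iii) $|CD|=2$ and $E$ is the midpoint of the segment $CD$; (iv) the line $OE$ is perpendicular to the line $CD$, i.e. $E\cdot(D-C)=0$; (v) $E$ lies strictly on the counterclockwise side of the line $OC$, i.e. $\det(C,E)=c\,e_2-e_1>0$ where $E=(e_1,e_2)$. Then such points $C,D,E$ exist, and for any such points the ray $OC$ has polar angle $\theta/3$ and the ray $OE$ has polar angle $2\theta/3$; that is, the rays $OC$ and $OE$ trisect the angle $\angle AOB$.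
   Context: This formalizes Scudder's carpenter's-square (T-square) trisection: the tool is a T whose top is a segment $CD$ of length $2$ and whose stem is the perpendicular to $CD$ through its midpoint $E$; the tool is placed so that the stem passes through the vertex $O$, the endpoint $C$ lies on the line parallel to $OA$ at distance $1$, and the endpoint $D$ lies on $OB$. The polar angle of a nonzero point is its argument measured counterclockwise from the positive $x$-axis. *)

theory Defs
  imports "HOL-Analysis.Analysis"
begin

definition polar_angle :: "real \<times> real \<Rightarrow> real" where
  "polar_angle P = (let a = Arg (Complex (fst P) (snd P)) in if a < 0 then a + 2 * pi else a)"

end

theory Submission
  imports Defs
begin

text \<open>Write \<open>C = r (cos \<beta>, sin \<beta>)\<close> with \<open>r sin \<beta> = 1\<close> and \<open>0 < \<beta> < \<pi>/2\<close>. Since \<open>E\<close> is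
  the midpoint of \<open>CD\<close>, the condition \<open>OE \<perp> CD\<close> says \<open>|OD| = |OC| = r\<close>, so \<open>CD\<close> is a
  chord of length \<open>2 = 2 r sin \<beta>\<close> of the circle of radius \<open>r\<close>; it subtends the angle \<open>2\<beta>\<close>,
  and the orientation condition picks \<open>D = r (cos 3\<beta>, sin 3\<beta>)\<close> among the two endpoints.
  Then \<open>E = r cos \<beta> (cos 2\<beta>, sin 2\<beta>)\<close>, and \<open>D\<close> lying on \<open>OB\<close> forces \<open>3\<beta> = \<theta>\<close>.
  Uniqueness of \<open>D\<close> rests on the fact that a plane vector is determined by its length and by
  its inner product and (signed) determinant with a fixed nonzero vector.\<close>

definition polar_point :: "real \<Rightarrow> real \<Rightarrow> real \<times> real" where
  "polar_point r a = (r * cos a, r * sin a)"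

definition tsquare_position ::
    "real \<Rightarrow> real \<times> real \<Rightarrow> real \<times> real \<Rightarrow> real \<times> real \<Rightarrow> bool" where
  "tsquare_position \<theta> C D E \<longleftrightarrow>
     snd C = 1 \<and> fst C > 0 \<and>
     (\<exists>t\<ge>0. D = (t * cos \<theta>, t * sin \<theta>)) \<and>
     dist C D = 2 \<and> E = (1/2) *\<^sub>R (C + D) \<and>
     fst E * (fst D - fst C) + snd E * (snd D - snd C) = 0 \<and>
     fst C * snd E - snd C * fst E > 0"

definition det2 :: "real \<times> real \<Rightarrow> real \<times> real \<Rightarrow> real" where
  "det2 P Q = fst P * snd Q - snd P * fst Q"

lemma polar_angle_polar_point:
  assumes "r > 0" "0 \<le> a" "a < 2 * pi"
  shows "polar_angle (polar_point r a) = a"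
proof (cases "a \<le> pi")
  case True
  have "Arg (Complex (r * cos a) (r * sin a)) = a"
    by (rule Arg_unique'[of r]) (use assms True in \<open>auto simp: complex_eq_iff rcis_def\<close>)
  then show ?thesis using assms by (simp add: polar_angle_def polar_point_def)
next
  case False
  have "Arg (Complex (r * cos a) (r * sin a)) = a - 2 * pi"
    by (rule Arg_unique'[of r]) (use assms False in \<open>auto simp: complex_eq_iff rcis_def cos_diff sin_diff\<close>)
  then show ?thesis using assms False by (simp add: polar_angle_def polar_point_def)
qed

lemma norm_polar_point: "norm (polar_point r a) = \<bar>r\<bar>"
proof -
  have "(r * cos a)\<^sup>2 + (r * sin a)\<^sup>2 = r\<^sup>2"
    by (metis mult.right_neutral power_mult_distrib distrib_left sin_cos_squared_add2)
  then show ?thesis by (simp add: polar_point_def norm_Pair)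
qed

lemma inner_polar_point:
  "inner (polar_point r a) (polar_point s b) = r * s * cos (b - a)"
  by (simp add: polar_point_def cos_diff algebra_simps)

lemma det2_polar_point:
  "det2 (polar_point r a) (polar_point s b) = r * s * sin (b - a)"
  by (simp add: polar_point_def det2_def sin_diff algebra_simps)

lemma midpoint_polar_point:
  "(1/2) *\<^sub>R (polar_point r (a - b) + polar_point r (a + b)) = polar_point (r * cos b) a"
  by (simp add: polar_point_def cos_add cos_diff sin_add sin_diff algebra_simps)

lemma det2_squared: "(det2 P Q)\<^sup>2 = (norm P)\<^sup>2 * (norm Q)\<^sup>2 - (inner P Q)\<^sup>2"
  by (cases P; cases Q) (simp add: det2_def norm_Pair power2_eq_square algebra_simps)

lemma plane_vector_decomposition:
  "(norm P)\<^sup>2 *\<^sub>R Q = inner P Q *\<^sub>R P + det2 P Q *\<^sub>R (- snd P, fst P)"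
  by (cases P; cases Q) (simp add: det2_def norm_Pair power2_eq_square algebra_simps)

lemma plane_vector_eqI:
  assumes "P \<noteq> 0" "norm Q = norm Q'" "inner P Q = inner P Q'" "det2 P Q > 0" "det2 P Q' > 0"
  shows "Q = Q'"
proof -
  have "(det2 P Q)\<^sup>2 = (det2 P Q')\<^sup>2"
    using assms(2,3) by (simp add: det2_squared)
  then have "det2 P Q = det2 P Q'"
    using assms(4,5) by (simp add: power2_eq_iff_nonneg)
  then have "(norm P)\<^sup>2 *\<^sub>R Q = (norm P)\<^sup>2 *\<^sub>R Q'"
    using assms(3) by (simp only: plane_vector_decomposition)
  then show ?thesis using assms(1) by simp
qed

lemma inner_eq_of_dist:
  fixes P Q :: "'a::real_inner"
  shows "inner P Q = ((norm P)\<^sup>2 + (norm Q)\<^sup>2 - (dist P Q)\<^sup>2) / 2"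
  by (simp add: dot_norm_neg dist_norm)

lemma trisection_chord_iff:
  assumes "0 < \<beta>" "\<beta> < pi / 2" "r * sin \<beta> = 1"
  shows "norm D = r \<and> dist (polar_point r \<beta>) D = 2 \<and> det2 (polar_point r \<beta>) D > 0
         \<longleftrightarrow> D = polar_point r (3 * \<beta>)"
proof -
  let ?C = "polar_point r \<beta>" and ?D = "polar_point r (3 * \<beta>)"
  have "sin \<beta> > 0" using assms(1,2) by (simp add: sin_gt_zero)
  then have r: "r > 0" using assms(3) by (metis zero_less_mult_pos2 zero_less_one)
  have norm_C: "norm ?C = r" and norm_D: "norm ?D = r"
    using r by (simp_all add: norm_polar_point)
  have "inner ?C ?D = r\<^sup>2 * cos (2 * \<beta>)"
    by (simp add: inner_polar_point power2_eq_square)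
  also have "\<dots> = r\<^sup>2 - 2 * (r * sin \<beta>)\<^sup>2"
    by (simp only: cos_double_sin) (simp add: power2_eq_square algebra_simps)
  finally have inner_C_D: "inner ?C ?D = r\<^sup>2 - 2"
    using assms(3) by simp
  have "(dist ?C ?D)\<^sup>2 = 2\<^sup>2"
    using inner_eq_of_dist[of ?C ?D] by (simp add: norm_C norm_D inner_C_D)
  then have dist_C_D: "dist ?C ?D = 2"
    using power2_eq_iff_nonneg zero_le_dist by (metis zero_le_numeral)
  have "sin (2 * \<beta>) > 0"
    using assms(1,2) by (simp add: sin_gt_zero)
  then have det2_C_D: "det2 ?C ?D > 0"
    using r by (simp add: det2_polar_point algebra_simps)
  show ?thesis
  proof
    assume D: "norm D = r \<and> dist ?C D = 2 \<and> det2 ?C D > 0"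
    then have "inner ?C D = r\<^sup>2 - 2"
      by (simp add: inner_eq_of_dist norm_C)
    moreover have "?C \<noteq> 0"
      using norm_C r by auto
    ultimately show "D = ?D"
      using plane_vector_eqI[of ?C D ?D] D norm_D inner_C_D det2_C_D by argo
  qed (use norm_D dist_C_D det2_C_D in auto)
qed

lemma inner_midpoint_diff:
  fixes C D :: "'a::real_inner"
  shows "inner ((1/2) *\<^sub>R (C + D)) (D - C) = ((norm D)\<^sup>2 - (norm C)\<^sup>2) / 2"
proof -
  have "inner (C + D) (D - C) = inner D D - inner C C"
    by (simp add: inner_add_left inner_diff_right inner_commute[of C D])
  then show ?thesis
    by (simp add: power2_norm_eq_inner)
qed

lemma det2_midpoint: "det2 C ((1/2) *\<^sub>R (C + D)) = det2 C D / 2"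
  by (simp add: det2_def algebra_simps)

lemma tsquare_position_iff:
  "tsquare_position \<theta> C D E \<longleftrightarrow>
     snd C = 1 \<and> fst C > 0 \<and> (\<exists>t\<ge>0. D = polar_point t \<theta>) \<and> E = (1/2) *\<^sub>R (C + D) \<and>
     norm D = norm C \<and> dist C D = 2 \<and> det2 C D > 0"
proof -
  let ?M = "(1/2) *\<^sub>R (C + D)"
  have "fst ?M * (fst D - fst C) + snd ?M * (snd D - snd C) = inner ?M (D - C)"
    by (cases C; cases D) simp
  also have "\<dots> = ((norm D)\<^sup>2 - (norm C)\<^sup>2) / 2"
    by (rule inner_midpoint_diff)
  finally have orth: "fst ?M * (fst D - fst C) + snd ?M * (snd D - snd C)
      = ((norm D)\<^sup>2 - (norm C)\<^sup>2) / 2" .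
  have orth_iff: "((norm D)\<^sup>2 - (norm C)\<^sup>2) / 2 = 0 \<longleftrightarrow> norm D = norm C"
    by (simp add: power2_eq_iff_nonneg)
  have det: "fst C * snd ?M - snd C * fst ?M = det2 C D / 2"
    using det2_midpoint[of C D] by (simp add: det2_def)
  have det_iff: "det2 C D / 2 > 0 \<longleftrightarrow> det2 C D > 0"
    by simp
  show ?thesis
  proof (cases "E = ?M")
    case True
    show ?thesis
      unfolding tsquare_position_def polar_point_def True orth orth_iff det det_iff by blast
  qed (auto simp: tsquare_position_def)
qed

lemma height_one_polar_point:
  assumes "c > 0"
  obtains \<beta> r where "0 < \<beta>" "\<beta> < pi / 2" "r * sin \<beta> = 1" "(c, 1) = polar_point r \<beta>"
proof
  let ?\<beta> = "pi / 2 - arctan c" and ?r = "sqrt (1 + c\<^sup>2)"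
  show "0 < ?\<beta>" "?\<beta> < pi / 2"
    using assms arctan_bounded[of c] by (auto simp: arctan_less_zero_iff)
  have "?r > 0"
    by (simp add: add_pos_nonneg)
  moreover have "sin ?\<beta> = 1 / ?r" "cos ?\<beta> = c / ?r"
    by (simp_all add: sin_diff cos_diff sin_arctan cos_arctan)
  ultimately show "?r * sin ?\<beta> = 1" "(c, 1) = polar_point ?r ?\<beta>"
    by (simp_all add: polar_point_def)
qed

lemma midpoint_polar_point_triple:
  "(1/2) *\<^sub>R (polar_point r \<beta> + polar_point r (3 * \<beta>)) = polar_point (r * cos \<beta>) (2 * \<beta>)"
  using midpoint_polar_point[of r "2 * \<beta>" \<beta>] by simp

lemma tsquare_position_polar_point:
  assumes "0 < \<theta>" "\<theta> < 3 * pi / 2" "r * sin (\<theta> / 3) = 1"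
  shows "tsquare_position \<theta> (polar_point r (\<theta> / 3)) (polar_point r \<theta>)
           (polar_point (r * cos (\<theta> / 3)) (2 * \<theta> / 3))"
proof -
  let ?\<beta> = "\<theta> / 3"
  let ?C = "polar_point r ?\<beta>" and ?D = "polar_point r \<theta>"
  have \<beta>: "0 < ?\<beta>" "?\<beta> < pi / 2"
    using assms(1,2) by auto
  have "sin ?\<beta> > 0" "cos ?\<beta> > 0"
    using \<beta> by (simp_all add: sin_gt_zero cos_gt_zero)
  then have r: "r > 0"
    using assms(3) by (metis zero_less_mult_pos2 zero_less_one)
  have "?D = polar_point r (3 * ?\<beta>)"
    by simp
  then have "norm ?D = r \<and> dist ?C ?D = 2 \<and> det2 ?C ?D > 0"
    using trisection_chord_iff[OF \<beta> assms(3)] by simp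
  moreover have "polar_point (r * cos ?\<beta>) (2 * \<theta> / 3) = (1/2) *\<^sub>R (?C + ?D)"
    using midpoint_polar_point_triple[of r ?\<beta>] by simp
  moreover have "snd ?C = 1" "fst ?C > 0"
    using assms(3) r \<open>cos ?\<beta> > 0\<close> by (simp_all add: polar_point_def)
  ultimately show ?thesis
    using r by (auto simp: tsquare_position_iff norm_polar_point intro!: exI[of _ r])
qed

lemma tsquare_position_unique:
  assumes "0 < \<theta>" "\<theta> < 3 * pi / 2" and pos: "tsquare_position \<theta> C D E"
  obtains r where "r * sin (\<theta> / 3) = 1"
    "C = polar_point r (\<theta> / 3)" "D = polar_point r \<theta>"
    "E = polar_point (r * cos (\<theta> / 3)) (2 * \<theta> / 3)"
proof -
  have "fst C > 0" and "C = (fst C, 1)"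
    using pos by (auto simp: tsquare_position_iff prod_eq_iff)
  then obtain \<beta> r where \<beta>: "0 < \<beta>" "\<beta> < pi / 2" "r * sin \<beta> = 1"
    and C: "C = polar_point r \<beta>"
    by (metis height_one_polar_point)
  have "sin \<beta> > 0"
    using \<beta> by (simp add: sin_gt_zero)
  then have r: "r > 0"
    using \<beta>(3) by (metis zero_less_mult_pos2 zero_less_one)
  have D: "D = polar_point r (3 * \<beta>)"
    using pos trisection_chord_iff[OF \<beta>, of D] r
    by (simp add: tsquare_position_iff C norm_polar_point)
  obtain t where "t \<ge> 0" and D_ray: "D = polar_point t \<theta>"
    using pos by (auto simp: tsquare_position_iff)
  moreover have "t \<noteq> 0"
    using D D_ray r norm_polar_point[of r "3 * \<beta>"] norm_polar_point[of t \<theta>] by auto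
  ultimately have "polar_angle D = \<theta>"
    using assms(1,2) by (simp add: polar_angle_polar_point)
  moreover have "polar_angle D = 3 * \<beta>"
    unfolding D using r \<beta> by (simp add: polar_angle_polar_point)
  ultimately have \<theta>: "\<theta> = 3 * \<beta>"
    by simp
  have thirds: "3 * \<beta> / 3 = \<beta>" "2 * (3 * \<beta>) / 3 = 2 * \<beta>"
    by simp_all
  have "E = (1/2) *\<^sub>R (C + D)"
    using pos by (simp add: tsquare_position_iff)
  then show ?thesis
    using that[of r] \<beta>(3) C D midpoint_polar_point_triple[of r \<beta>] unfolding \<theta> thirds by simp
qed

theorem mainTheorem1:
  fixes \<theta> :: real
  assumes "0 < \<theta>" and "\<theta> < 3 * pi / 2"
  shows "(\<exists>C D E :: real \<times> real.
            snd C = 1 \<and> fst C > 0 \<and>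
            (\<exists>t\<ge>0. D = (t * cos \<theta>, t * sin \<theta>)) \<and>
            dist C D = 2 \<and> E = (1/2) *\<^sub>R (C + D) \<and>
            fst E * (fst D - fst C) + snd E * (snd D - snd C) = 0 \<and>
            fst C * snd E - snd C * fst E > 0)
       \<and> (\<forall>C D E :: real \<times> real.
            snd C = 1 \<and> fst C > 0 \<and>
            (\<exists>t\<ge>0. D = (t * cos \<theta>, t * sin \<theta>)) \<and>
            dist C D = 2 \<and> E = (1/2) *\<^sub>R (C + D) \<and>
            fst E * (fst D - fst C) + snd E * (snd D - snd C) = 0 \<and>
            fst C * snd E - snd C * fst E > 0
            \<longrightarrow> polar_angle C = \<theta> / 3 \<and> polar_angle E = 2 * \<theta> / 3)"
proof -
  define r where "r = 1 / sin (\<theta> / 3)"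
  have "sin (\<theta> / 3) > 0" "cos (\<theta> / 3) > 0"
    using assms by (simp_all add: sin_gt_zero cos_gt_zero)
  then have "r * sin (\<theta> / 3) = 1"
    by (simp add: r_def)
  then have "\<exists>C D E. tsquare_position \<theta> C D E"
    using tsquare_position_polar_point[OF assms] by blast
  moreover have "polar_angle C = \<theta> / 3 \<and> polar_angle E = 2 * \<theta> / 3"
    if pos: "tsquare_position \<theta> C D E" for C D E
  proof -
    obtain r where r: "r * sin (\<theta> / 3) = 1" and "C = polar_point r (\<theta> / 3)"
      "E = polar_point (r * cos (\<theta> / 3)) (2 * \<theta> / 3)"
      using tsquare_position_unique[OF assms pos] by blast
    moreover have "r > 0"
      using r \<open>sin (\<theta> / 3) > 0\<close> by (metis zero_less_mult_pos2 zero_less_one)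
    ultimately show ?thesis
      using assms \<open>cos (\<theta> / 3) > 0\<close> by (simp add: polar_angle_polar_point)
  qed
  ultimately show ?thesis
    unfolding tsquare_position_def by blast
qed

end
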